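(* In the basic function field $F=K(x,y)$, set $R=y/x^{q^k}$ and $S=y^{q^j}/x$. There exists a unique element $u\in F$ such that $$R=\mathrm{Tr}_k(u)+\alpha\quad\text{and}\quad S=-\mathrm{Tr}_j(u).$$ Moreover $K(u)=K(R,S)$ and $F=K(x,y)=K(x,u)=K(u,y)$.
   Context: Standing setup: $p$ is a prime, $q$ a power of $p$, $n\ge2$, $\ell=q^n$, and $K$ is either $\mathbb{F}_\ell$ or its algebraic closure $\overline{\mathbb{F}}_\ell$. For $a\ge1$, $\mathrm{Tr}_a(T)=T+T^q+\cdots+T^{q^{a-1}}$. Fix integers $j,k\ge1$ with $n=j+k$, $\gcd(j,k)=1$ and $p\nmid j$, and let $\alpha\in\mathbb{F}_p$ be the inverse of $j$ modulo $p$. The basic function field is $F=K(x,y)$ where $x$ is transcendental over $K$ and $y$ is algebraic over $K(x)$ with $\mathrm{Tr}_j(y/x^{q^k})+\mathrm{Tr}_k(y^{q^j}/x)=1$. *)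

theory Defs
  imports Main "HOL-Computational_Algebra.Polynomial"
begin

definition is_subfield :: "'a::field set \<Rightarrow> bool" where
  "is_subfield A \<longleftrightarrow> 0 \<in> A \<and> 1 \<in> A \<and>
     (\<forall>a\<in>A. \<forall>b\<in>A. a + b \<in> A \<and> a * b \<in> A) \<and>
     (\<forall>a\<in>A. - a \<in> A \<and> inverse a \<in> A)"

definition field_gen :: "'a::field set \<Rightarrow> 'a set" where
  "field_gen S = \<Inter> {A. is_subfield A \<and> S \<subseteq> A}"

definition transcendental_over :: "'a::field set \<Rightarrow> 'a \<Rightarrow> bool" where
  "transcendental_over K x \<longleftrightarrow>
     (\<forall>P. P \<noteq> 0 \<and> (\<forall>i. coeff P i \<in> K) \<longrightarrow> poly P x \<noteq> 0)"

definition alg_closed_set :: "'a::field set \<Rightarrow> bool" where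
  "alg_closed_set K \<longleftrightarrow>
     (\<forall>P. degree P \<ge> 1 \<and> (\<forall>i. coeff P i \<in> K) \<longrightarrow> (\<exists>z\<in>K. poly P z = 0))"

definition Tr :: "nat \<Rightarrow> nat \<Rightarrow> 'a::field \<Rightarrow> 'a" where
  "Tr q a T = (\<Sum>i<a. T ^ (q ^ i))"

text \<open>K is F_l (all l elements of F_l lie in the ambient field) or its algebraic
  closure (inside the ambient field).\<close>

definition base_field_choice :: "nat \<Rightarrow> 'a::field set \<Rightarrow> bool" where
  "base_field_choice l K \<longleftrightarrow>
     (K = {z. z ^ l = z} \<and> card K = l) \<or>
     (K = {z. \<exists>m\<ge>1. z ^ (l ^ m) = z} \<and> alg_closed_set K)"

end

theory Submission
  imports Defs "HOL-Computational_Algebra.Primes"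
begin

text \<open>
  Write \<open>R = y / x^(q^k)\<close> and \<open>S = y^(q^j) / x\<close>, so the defining equation
  of the basic function field reads \<open>Tr_j R + Tr_k S = 1\<close>.  In characteristic \<open>p\<close> every
  \<open>Tr_a\<close> is additive and commutes with the Frobenius powers \<open>z \<mapsto> z^(p^f)\<close>, and,
  writing \<open>Tr_{q',m}\<close> for the trace of length \<open>m\<close> with respect to \<open>q'\<close>,
  \<open>Tr_{q^c,m} \<circ> Tr_{q,c} = Tr_{q,mc}\<close>.  From a Bezout relation \<open>k m' = j m + 1\<close> one gets
  the explicit inversion formula \<open>z = Tr_{q^k,m'}(Tr_k z) - (Tr_{q^j,m}(Tr_j z))^q\<close>, which
  solves the system \<open>Tr_j u = a\<close>, \<open>Tr_k u = b\<close> uniquely whenever \<open>Tr_k a = Tr_j b\<close>, by a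
  polynomial in \<open>a, b\<close>.  Taking \<open>a = -S\<close> and \<open>b = R - \<alpha>\<close> (compatible since
  \<open>Tr_j \<alpha> = 1\<close>) yields the unique \<open>u\<close>, and shows that \<open>u\<close> and \<open>{R, S}\<close> lie in the same
  subfields, i.e. \<open>K(u) = K(R,S)\<close>.  Finally \<open>y = R x^(q^k)\<close> and \<open>x = y^(q^j) / S\<close> let
  \<open>u\<close> replace either generator of \<open>K(x,y)\<close>.
\<close>

lemma sum_lessThan_add:
  fixes a b :: nat
  shows "(\<Sum>i<a + b. f i) = (\<Sum>i<a. f i) + (\<Sum>i<b. f (a + i))"
  by (induction b) (auto simp: add.assoc)

text \<open>The explicit inverse of the pair of traces \<open>u \<mapsto> (Tr_j u, Tr_k u)\<close> attached to a
  Bezout relation \<open>k m' = j m + 1\<close>.\<close>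

definition trace_inverse :: "nat \<Rightarrow> nat \<Rightarrow> nat \<Rightarrow> nat \<Rightarrow> nat \<Rightarrow> 'a::field \<Rightarrow> 'a \<Rightarrow> 'a" where
  "trace_inverse q j k m m' a b = Tr (q ^ k) m' b - (Tr (q ^ j) m a) ^ q"

context
  fixes q e :: nat
  assumes char_prime: "prime CHAR('a::field)" and q_char_power: "q = CHAR('a) ^ e"
begin

lemma q_pos: "q > 0"
  using char_prime q_char_power by (simp add: prime_gt_0_nat)

lemma frobenius_sum: "(sum (f :: _ \<Rightarrow> 'a) A) ^ (q ^ i) = (\<Sum>x\<in>A. f x ^ (q ^ i))"
  by (rule freshmans_dream_sum'[OF char_prime, where n = "e * i"])
     (simp add: q_char_power power_mult)

lemma frobenius_diff: "((a :: 'a) - b) ^ (q ^ i) = a ^ (q ^ i) - b ^ (q ^ i)"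
proof -
  have "((a - b) + b) ^ (q ^ i) = (a - b) ^ (q ^ i) + b ^ (q ^ i)"
    using frobenius_sum[of "\<lambda>t. if t then a - b else b" UNIV i] by (simp add: UNIV_bool)
  then show ?thesis by (simp add: algebra_simps)
qed

lemma Tr_diff: "Tr q a ((u :: 'a) - v) = Tr q a u - Tr q a v"
  unfolding Tr_def by (simp add: frobenius_diff sum_subtractf)

lemma Tr_zero: "Tr q a (0 :: 'a) = 0"
  using Tr_diff[of a 0 0] by simp

lemma Tr_minus: "Tr q a (- (u :: 'a)) = - Tr q a u"
  using Tr_diff[of a 0 u] Tr_zero by simp

lemma Tr_frobenius: "Tr q a ((z :: 'a) ^ (CHAR('a) ^ g)) = (Tr q a z) ^ (CHAR('a) ^ g)"
  unfolding Tr_def freshmans_dream_sum'[OF char_prime refl]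
  by (simp add: mult.commute flip: power_mult)

lemma Tr_sum: "Tr q a (sum (f :: _ \<Rightarrow> 'a) A) = (\<Sum>x\<in>A. Tr q a (f x))"
  unfolding Tr_def frobenius_sum by (rule sum.swap)

lemma Tr_commute:
  assumes "q' = CHAR('a) ^ e'"
  shows "Tr q a (Tr q' b (z :: 'a)) = Tr q' b (Tr q a z)"
proof -
  have "Tr q a (z ^ (q' ^ i)) = (Tr q a z) ^ (q' ^ i)" for i
    using Tr_frobenius[of a z "e' * i"] assms by (simp add: power_mult)
  then show ?thesis
    unfolding Tr_def[of q' b] Tr_sum by simp
qed

lemma Tr_compose: "Tr (q ^ c) m (Tr q c (z :: 'a)) = Tr q (m * c) z"
proof (induction m)
  case 0
  then show ?case by (simp add: Tr_def)
next
  case (Suc m)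
  have "(q ^ c) ^ m = CHAR('a) ^ (e * (c * m))"
    by (simp add: q_char_power power_mult)
  then have "(Tr q c z) ^ ((q ^ c) ^ m) = Tr q c (z ^ (q ^ (m * c)))"
    by (simp add: Tr_frobenius mult.commute flip: power_mult)
  also have "\<dots> = (\<Sum>i<c. z ^ (q ^ (m * c + i)))"
    unfolding Tr_def by (simp add: power_add flip: power_mult)
  finally have last_term: "(Tr q c z) ^ ((q ^ c) ^ m) = (\<Sum>i<c. z ^ (q ^ (m * c + i)))" .
  have "Tr q (Suc m * c) z = Tr q (m * c) z + (\<Sum>i<c. z ^ (q ^ (m * c + i)))"
    unfolding Tr_def mult_Suc add.commute[of c] by (rule sum_lessThan_add)
  then show ?case
    using Suc.IH last_term by (simp add: Tr_def)
qed

lemma Tr_frobenius_fixed: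
  assumes "(c :: 'a) ^ q = c"
  shows "Tr q a c = of_nat a * c"
proof -
  have "c ^ (q ^ i) = c" for i
    by (induction i) (simp_all add: assms power_mult flip: power_mult_distrib mult.commute)
  then show ?thesis by (simp add: Tr_def)
qed

text \<open>\<open>Tr_j (1/j) = 1\<close> when \<open>p\<close> does not divide \<open>j\<close>; this is why \<open>\<alpha> = 1/j\<close> is the
  right constant.\<close>

lemma Tr_inverse_of_nat:
  assumes "\<not> CHAR('a) dvd j"
  shows "Tr q j (inverse (of_nat j :: 'a)) = 1"
proof -
  have "(of_nat j :: 'a) ^ q = of_nat j"
    using frobenius_sum[of "\<lambda>_. 1" "{..<j}" 1] by simp
  then have "Tr q j (inverse (of_nat j :: 'a)) = of_nat j * inverse (of_nat j)"
    by (simp add: Tr_frobenius_fixed power_inverse)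
  also have "\<dots> = 1"
    using assms of_nat_eq_0_iff_char_dvd[where 'a = 'a] by simp
  finally show ?thesis .
qed

text \<open>The identity behind the inversion of the pair of traces: if \<open>k m' = j m + 1\<close>,
  then \<open>z\<close> is recovered from \<open>Tr_j z\<close> and \<open>Tr_k z\<close>, because composing traces
  multiplies their lengths and \<open>Tr_{jm+1} z = z + (Tr_{jm} z)^q\<close>.\<close>

lemma Tr_inversion_identity:
  assumes bezout: "k * m' = j * m + 1"
  shows "Tr (q ^ k) m' (Tr q k z) - (Tr (q ^ j) m (Tr q j (z :: 'a))) ^ q = z"
proof -
  have "Tr (q ^ k) m' (Tr q k z) = Tr q (Suc (m * j)) z"
    using bezout by (simp add: Tr_compose mult.commute)
  also have "\<dots> = z + (\<Sum>i<m * j. z ^ (q ^ Suc i))"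
    unfolding Tr_def by (subst sum.lessThan_Suc_shift) simp
  also have "(\<Sum>i<m * j. z ^ (q ^ Suc i)) = (Tr q (m * j) z) ^ q"
    using frobenius_sum[of "\<lambda>i. z ^ (q ^ i)" "{..<m * j}" 1]
    by (simp add: Tr_def mult.commute flip: power_mult)
  also have "Tr q (m * j) z = Tr (q ^ j) m (Tr q j z)"
    by (simp add: Tr_compose)
  finally show ?thesis by simp
qed

lemma trace_inverse_Tr:
  assumes "k * m' = j * m + 1"
  shows "trace_inverse q j k m m' (Tr q j z) (Tr q k z) = (z :: 'a)"
  unfolding trace_inverse_def by (rule Tr_inversion_identity[OF assms])

lemma Tr_trace_inverse:
  assumes bezout: "k * m' = j * m + 1" and compatible: "Tr q k a = Tr q j (b :: 'a)"
  shows "Tr q j (trace_inverse q j k m m' a b) = a"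
    and "Tr q k (trace_inverse q j k m m' a b) = b"
proof -
  have powers: "q ^ c = CHAR('a) ^ (e * c)" for c
    by (simp add: q_char_power power_mult)
  have Tr_q: "Tr q c (w ^ q) = (Tr q c w) ^ q" for c and w :: 'a
    using Tr_frobenius[of c w e] q_char_power by simp
  have "Tr q c (trace_inverse q j k m m' a b)
          = Tr (q ^ k) m' (Tr q c b) - (Tr (q ^ j) m (Tr q c a)) ^ q" for c
    unfolding trace_inverse_def Tr_diff Tr_q Tr_commute[OF powers] ..
  then show "Tr q j (trace_inverse q j k m m' a b) = a"
    and "Tr q k (trace_inverse q j k m m' a b) = b"
    using Tr_inversion_identity[OF bezout] compatible by metis+
qed

end

lemma subfield_add: "is_subfield A \<Longrightarrow> a \<in> A \<Longrightarrow> b \<in> A \<Longrightarrow> a + b \<in> A"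
  and subfield_mult: "is_subfield A \<Longrightarrow> a \<in> A \<Longrightarrow> b \<in> A \<Longrightarrow> a * b \<in> A"
  and subfield_minus: "is_subfield A \<Longrightarrow> a \<in> A \<Longrightarrow> - a \<in> A"
  and subfield_inverse: "is_subfield A \<Longrightarrow> a \<in> A \<Longrightarrow> inverse a \<in> A"
  and subfield_zero: "is_subfield A \<Longrightarrow> 0 \<in> A"
  and subfield_one: "is_subfield A \<Longrightarrow> 1 \<in> A"
  unfolding is_subfield_def by auto

lemma subfield_diff: "is_subfield A \<Longrightarrow> a \<in> A \<Longrightarrow> b \<in> A \<Longrightarrow> a - b \<in> A"
  using subfield_add[of A a "- b"] subfield_minus[of A b] by simp

lemma subfield_divide: "is_subfield A \<Longrightarrow> a \<in> A \<Longrightarrow> b \<in> A \<Longrightarrow> a / b \<in> A"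
  using subfield_mult[of A a "inverse b"] subfield_inverse[of A b] by (simp add: divide_inverse)

lemma subfield_power: "is_subfield A \<Longrightarrow> a \<in> A \<Longrightarrow> a ^ n \<in> A"
  by (induction n) (auto intro: subfield_one subfield_mult)

lemma subfield_sum: "is_subfield A \<Longrightarrow> (\<And>i. i \<in> I \<Longrightarrow> f i \<in> A) \<Longrightarrow> sum f I \<in> A"
  by (induction I rule: infinite_finite_induct) (auto intro: subfield_zero subfield_add)

lemma subfield_of_nat: "is_subfield A \<Longrightarrow> of_nat n \<in> A"
  by (induction n) (auto intro: subfield_zero subfield_one subfield_add)

lemma subfield_Tr: "is_subfield A \<Longrightarrow> a \<in> A \<Longrightarrow> Tr q c a \<in> A"
  unfolding Tr_def by (auto intro: subfield_sum subfield_power)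

lemma field_gen_subfield: "is_subfield (field_gen S)"
  unfolding is_subfield_def field_gen_def by auto

lemma field_gen_superset: "S \<subseteq> field_gen S"
  unfolding field_gen_def by auto

lemma field_gen_mem: "a \<in> S \<Longrightarrow> a \<in> field_gen S"
  using field_gen_superset by blast

lemma field_gen_least: "is_subfield A \<Longrightarrow> S \<subseteq> A \<Longrightarrow> field_gen S \<subseteq> A"
  unfolding field_gen_def by auto

lemma field_gen_mono: "S \<subseteq> T \<Longrightarrow> field_gen S \<subseteq> field_gen T"
  unfolding field_gen_def by auto

lemma field_gen_eqI:
  assumes "S \<subseteq> field_gen T" and "T \<subseteq> field_gen S"
  shows "field_gen S = field_gen T"
  using assms by (intro equalityI field_gen_least field_gen_subfield)

lemma field_gen_same_subfields:
  assumes "\<And>L. is_subfield L \<Longrightarrow> u \<in> L \<longleftrightarrow> a \<in> L \<and> b \<in> L"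
  shows "field_gen (K \<union> {u}) = field_gen (K \<union> {a, b})"
proof (rule field_gen_eqI)
  have "u \<in> field_gen (K \<union> {a, b})"
    using assms[OF field_gen_subfield, of "K \<union> {a, b}"]
      field_gen_mem[of a "K \<union> {a, b}"] field_gen_mem[of b "K \<union> {a, b}"] by simp
  then show "K \<union> {u} \<subseteq> field_gen (K \<union> {a, b})"
    using field_gen_superset[of "K \<union> {a, b}"] by auto
  have "a \<in> field_gen (K \<union> {u})" and "b \<in> field_gen (K \<union> {u})"
    using assms[OF field_gen_subfield, of "K \<union> {u}"] field_gen_mem[of u "K \<union> {u}"]
    by simp_all
  then show "K \<union> {a, b} \<subseteq> field_gen (K \<union> {u})"
    using field_gen_superset[of "K \<union> {u}"] by auto
qed

lemma trace_system:
  fixes a b :: "'a::field"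
  assumes char_prime: "prime CHAR('a)" and q_char_power: "q = CHAR('a) ^ e"
    and "coprime j k" and "k \<ge> 1"
    and compatible: "Tr q k a = Tr q j b"
  obtains u where "Tr q j u = a" and "Tr q k u = b"
    and "\<And>v. Tr q j v = a \<Longrightarrow> Tr q k v = b \<Longrightarrow> v = u"
    and "\<And>L. is_subfield L \<Longrightarrow> a \<in> L \<Longrightarrow> b \<in> L \<Longrightarrow> u \<in> L"
proof -
  obtain m' m where bezout: "k * m' = j * m + 1"
    using bezout_nat[of k j] assms(3,4) by (auto simp: coprime_iff_gcd_eq_1 gcd.commute)
  note inverse_facts = Tr_trace_inverse[OF char_prime q_char_power bezout compatible]
    trace_inverse_Tr[OF char_prime q_char_power bezout]
  show thesis
  proof (rule that[of "trace_inverse q j k m m' a b"])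
    show "v = trace_inverse q j k m m' a b" if "Tr q j v = a" "Tr q k v = b" for v
      using inverse_facts(3)[of v] that by simp
    show "trace_inverse q j k m m' a b \<in> L" if "is_subfield L" "a \<in> L" "b \<in> L" for L
      unfolding trace_inverse_def using that
      by (intro subfield_diff subfield_power subfield_Tr)
  qed (fact inverse_facts(1,2))+
qed

text \<open>In a function field of the shape \<open>K(x,y)\<close> with \<open>R = y / x^a\<close> and
  \<open>S = y^b / x\<close>, any element \<open>u \<in> K(x,y)\<close> with \<open>K(u) = K(R,S)\<close> can replace
  either generator, since \<open>y = R x^a\<close> and \<open>x = y^b / S\<close>.\<close>

lemma field_gen_exchange:
  fixes x y u :: "'a::field"
  assumes "x \<noteq> 0" and "y \<noteq> 0"
    and same_field: "field_gen (K \<union> {u}) = field_gen (K \<union> {y / x ^ a, y ^ b / x})"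
    and u_mem: "u \<in> field_gen (K \<union> {x, y})"
  shows "field_gen (K \<union> {x, y}) = field_gen (K \<union> {x, u})"
    and "field_gen (K \<union> {x, y}) = field_gen (K \<union> {u, y})"
proof -
  have RS: "y / x ^ a \<in> field_gen (K \<union> {u})" "y ^ b / x \<in> field_gen (K \<union> {u})"
    unfolding same_field by (simp_all add: field_gen_mem)
  have R: "y / x ^ a \<in> field_gen (K \<union> {x, u})"
    by (rule subsetD[OF field_gen_mono RS(1)]) auto
  have S: "y ^ b / x \<in> field_gen (K \<union> {u, y})"
    by (rule subsetD[OF field_gen_mono RS(2)]) auto
  have "y / x ^ a * x ^ a \<in> field_gen (K \<union> {x, u})"
    by (intro subfield_mult subfield_power field_gen_subfield R field_gen_mem) simp
  then have y_mem: "y \<in> field_gen (K \<union> {x, u})"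
    using assms(1) by simp
  have "y ^ b / (y ^ b / x) \<in> field_gen (K \<union> {u, y})"
    by (intro subfield_divide subfield_power field_gen_subfield S field_gen_mem) simp
  then have x_mem: "x \<in> field_gen (K \<union> {u, y})"
    using assms by simp
  show "field_gen (K \<union> {x, y}) = field_gen (K \<union> {x, u})"
    using y_mem u_mem field_gen_superset[of "K \<union> {x, y}"] field_gen_superset[of "K \<union> {x, u}"]
    by (intro field_gen_eqI) auto
  show "field_gen (K \<union> {x, y}) = field_gen (K \<union> {u, y})"
    using x_mem u_mem field_gen_superset[of "K \<union> {x, y}"] field_gen_superset[of "K \<union> {u, y}"]
    by (intro field_gen_eqI) auto
qed

text \<open>The compatibility condition
  of \<open>trace_system\<close> is the trace equation itself, using \<open>Tr_j \<alpha> = 1\<close>.\<close>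

lemma trace_equation_parametrisation:
  fixes R S :: "'a::field"
  assumes char_prime: "prime CHAR('a)" and q_char_power: "q = CHAR('a) ^ e"
    and "coprime j k" and "k \<ge> 1" and "\<not> CHAR('a) dvd j"
    and trace_equation: "Tr q j R + Tr q k S = 1"
  obtains u where
    "\<And>v. R = Tr q k v + inverse (of_nat j) \<and> S = - Tr q j v \<longleftrightarrow> v = u"
    and "\<And>L. is_subfield L \<Longrightarrow> u \<in> L \<longleftrightarrow> R \<in> L \<and> S \<in> L"
proof -
  define \<alpha> where "\<alpha> = inverse (of_nat j :: 'a)"
  note Tr_linear = Tr_diff[OF char_prime q_char_power] Tr_minus[OF char_prime q_char_power]
  have "Tr q j \<alpha> = 1"
    unfolding \<alpha>_def using Tr_inverse_of_nat[OF char_prime q_char_power] assms(5) .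
  then have "Tr q k (- S) = Tr q j (R - \<alpha>)"
    using trace_equation by (simp add: Tr_linear algebra_simps)
  then obtain u where solves: "Tr q j u = - S" "Tr q k u = R - \<alpha>"
    and unique: "\<And>v. Tr q j v = - S \<Longrightarrow> Tr q k v = R - \<alpha> \<Longrightarrow> v = u"
    and rational: "\<And>L. is_subfield L \<Longrightarrow> - S \<in> L \<Longrightarrow> R - \<alpha> \<in> L \<Longrightarrow> u \<in> L"
    by (rule trace_system[OF char_prime q_char_power assms(3,4)]) blast
  show thesis
  proof (rule that[of u])
    show "R = Tr q k v + inverse (of_nat j) \<and> S = - Tr q j v \<longleftrightarrow> v = u" for v
      using solves unique[of v] unfolding \<alpha>_def[symmetric] by auto
    fix L :: "'a set"
    assume L: "is_subfield L"
    have "\<alpha> \<in> L"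
      unfolding \<alpha>_def by (intro subfield_inverse subfield_of_nat L)
    have "R = Tr q k u + \<alpha>" and "S = - Tr q j u"
      using solves by simp_all
    then show "u \<in> L \<longleftrightarrow> R \<in> L \<and> S \<in> L"
      using rational[OF L] \<open>\<alpha> \<in> L\<close>
      by (metis L subfield_add subfield_diff subfield_minus subfield_Tr)
  qed
qed

lemma base_field_choice_zero_one:
  assumes "base_field_choice l K" and "l > 0"
  shows "0 \<in> K" and "1 \<in> K"
  using assms unfolding base_field_choice_def by (auto simp: power_0_left intro: exI[of _ 1])

text \<open>A transcendental element is nonzero, being no root of the polynomial \<open>X\<close>.\<close>

lemma transcendental_nonzero:
  assumes "transcendental_over K x" and "0 \<in> K" and "1 \<in> K"
  shows "x \<noteq> 0"
proof -
  have "\<forall>i. coeff [:0, 1:] i \<in> K"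
    using assms(2,3) by (auto simp: coeff_pCons split: nat.split)
  then have "poly [:0, 1:] x \<noteq> 0"
    using assms(1) unfolding transcendental_over_def by (metis pCons_eq_0_iff zero_neq_one)
  then show ?thesis by simp
qed

theorem proposition2p2:
  fixes p e j k n l :: nat and K :: "'a::field set" and x y :: 'a
  assumes "prime p" and "CHAR('a) = p" and "e \<ge> 1"
    and "n = j + k" and "n \<ge> 2" and "l = (p ^ e) ^ n"
    and "j \<ge> 1" and "k \<ge> 1" and "coprime j k" and "\<not> p dvd j"
    and "base_field_choice l K"
    and "transcendental_over K x"
    and "Tr (p ^ e) j (y / x ^ ((p ^ e) ^ k)) + Tr (p ^ e) k (y ^ ((p ^ e) ^ j) / x) = 1"
  shows "let q = p ^ e; F = field_gen (K \<union> {x, y});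
             R = y / x ^ (q ^ k); S = y ^ (q ^ j) / x;
             \<alpha> = inverse (of_nat j :: 'a)
         in (\<exists>!u. u \<in> F \<and> R = Tr q k u + \<alpha> \<and> S = - Tr q j u) \<and>
            (\<forall>u. u \<in> F \<and> R = Tr q k u + \<alpha> \<and> S = - Tr q j u \<longrightarrow>
                 field_gen (K \<union> {u}) = field_gen (K \<union> {R, S}) \<and>
                 F = field_gen (K \<union> {x, u}) \<and>
                 F = field_gen (K \<union> {u, y}))"
proof -
  define q where "q = p ^ e"
  define R where "R = y / x ^ (q ^ k)"
  define S where "S = y ^ (q ^ j) / x"
  have char_prime: "prime CHAR('a)" and q_char_power: "q = CHAR('a) ^ e"
    and j_unit: "\<not> CHAR('a) dvd j"
    using assms(1,2,10) by (simp_all add: q_def)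
  have "x \<noteq> 0"
    using transcendental_nonzero[OF assms(12)] base_field_choice_zero_one[OF assms(11)]
      assms(1,6) by (simp add: prime_gt_0_nat)
  have trace_equation: "Tr q j R + Tr q k S = 1"
    using assms(13) by (simp add: q_def R_def S_def)
  have "y \<noteq> 0"
    using trace_equation q_pos[OF char_prime q_char_power] Tr_zero[OF char_prime q_char_power]
    by (auto simp: R_def S_def power_0_left)
  obtain u where solutions: "\<And>v. R = Tr q k v + inverse (of_nat j) \<and> S = - Tr q j v \<longleftrightarrow> v = u"
    and subfields: "\<And>L. is_subfield L \<Longrightarrow> u \<in> L \<longleftrightarrow> R \<in> L \<and> S \<in> L"
    by (rule trace_equation_parametrisation[OF char_prime q_char_power assms(9,8)
          j_unit trace_equation]) blast+
  have same_field: "field_gen (K \<union> {u}) = field_gen (K \<union> {R, S})"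
    using subfields by (rule field_gen_same_subfields)
  have "R \<in> field_gen (K \<union> {x, y})" and "S \<in> field_gen (K \<union> {x, y})"
    unfolding R_def S_def
    by (intro subfield_divide subfield_power field_gen_subfield field_gen_mem; simp)+
  then have "u \<in> field_gen (K \<union> {x, y})"
    using subfields[OF field_gen_subfield] by blast
  then show ?thesis
    using field_gen_exchange[OF \<open>x \<noteq> 0\<close> \<open>y \<noteq> 0\<close> same_field[unfolded R_def S_def]]
      same_field solutions
    unfolding Let_def q_def[symmetric] R_def[symmetric] S_def[symmetric] by metis
qed

end
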